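(* Let $G$ be a finite abelian group of order $mn$, let $N \le G$ be a subgroup of order $n$, and let $D \subseteq G$ be a semiregular $(m,n,k,\lambda_1,\lambda_2)$-divisible difference set in $G$ relative to $N$. Let $\{\eta_j\}_{j=1}^m$ be an enumeration of the annihilator $N^\perp$, and let $\{\chi_i\}_{i=1}^n$ be a set of coset representatives of $\widehat{G}/N^\perp$. For each $1\le i\le n$ and $1 \le j \le m$ define the vector \[ e^i_j := \frac{1}{\sqrt{k}}\big((\chi_i\eta_j)(g)\big)_{g\in D}\in\mathbb{C}^k \] (coordinates indexed by the elements of $D$). Then for each $i$, $\{e^i_j\}_{j=1}^m$ is a set of $m$ flat orthonormal vectors in $\mathbb{C}^k$. Moreover, setting $\mathcal{W}_i=\operatorname{span}\{e^i_j\}_{j=1}^m$ for $1\le i\le n$, the collection $\{\mathcal{W}_i\}_{i=1}^n$ of $n$ subspaces of dimension $m$ is an equichordal tight fusion frame for $\mathbb{C}^k$ with fusion frame bound $nm/k$.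
   Context: $\widehat{G}$ denotes the group (under pointwise multiplication) of characters, i.e. homomorphisms $\chi:G\to\{z\in\mathbb{C}:|z|=1\}$; $\chi_0$ is the principal character (constantly $1$). For a subgroup $N\le G$, $N^\perp=\{\chi\in\widehat{G}:\chi(h)=1\text{ for all }h\in N\}$. A subset $D\subseteq G$ of size $k$ is an $(m,n,k,\lambda_1,\lambda_2)$-divisible difference set relative to $N$ (where $|G|=mn$, $|N|=n$) if the multiset $\{d-d': d,d'\in D, d\neq d'\}$ contains each element of $G\setminus N$ exactly $\lambda_2$ times and each element of $N\setminus\{0\}$ exactly $\lambda_1$ times; it is semiregular if moreover $k>\lambda_1$ and $k^2-\lambda_2 mn=0$. A vector is flat if all its coordinates have equal modulus. A collection of $m$-dimensional subspaces $\{\mathcal{W}_i\}_{i=1}^n$ of $\mathbb{F}^k$ with orthogonal projections $P_i$ is a tight fusion frame with bound $A$ if $\sum_{i=1}^n P_i=AI_k$. It is equichordal if, choosing for each $i$ a matrix $L_i$ whose columns are an orthonormal basis of $\mathcal{W}_i$, $\operatorname{trace}(L_i^*L_jL_j^*L_i)$ $(=\operatorname{trace}(P_iP_j))$ is the same for all $i\neq j$. *)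

theory Defs
  imports Complex_Main
begin

text \<open>The finite abelian group G is the (finite) carrier type 'g, written additively.\<close>

definition add_subgroup :: "'g::ab_group_add set \<Rightarrow> bool" where
  "add_subgroup N \<longleftrightarrow> 0 \<in> N \<and> (\<forall>a\<in>N. \<forall>b\<in>N. a - b \<in> N)"

definition is_char :: "('g::ab_group_add \<Rightarrow> complex) \<Rightarrow> bool" where
  "is_char \<chi> \<longleftrightarrow> (\<forall>a b. \<chi> (a + b) = \<chi> a * \<chi> b) \<and> (\<forall>a. cmod (\<chi> a) = 1)"

definition annihilator :: "'g::ab_group_add set \<Rightarrow> ('g \<Rightarrow> complex) set" where
  "annihilator N = {\<chi>. is_char \<chi> \<and> (\<forall>h\<in>N. \<chi> h = 1)}"

definition diff_count :: "'g::ab_group_add set \<Rightarrow> 'g \<Rightarrow> nat" where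
  "diff_count D g = card {(d, d'). d \<in> D \<and> d' \<in> D \<and> d \<noteq> d' \<and> d - d' = g}"

definition divisible_difference_set ::
  "nat \<Rightarrow> nat \<Rightarrow> nat \<Rightarrow> nat \<Rightarrow> nat \<Rightarrow> 'g::{ab_group_add,finite} set \<Rightarrow> 'g set \<Rightarrow> bool" where
  "divisible_difference_set m n k l1 l2 N D \<longleftrightarrow>
     card (UNIV :: 'g set) = m * n \<and> card N = n \<and> card D = k \<and>
     (\<forall>g. g \<notin> N \<longrightarrow> diff_count D g = l2) \<and>
     (\<forall>g\<in>N - {0}. diff_count D g = l1)"

definition semiregular_dds ::
  "nat \<Rightarrow> nat \<Rightarrow> nat \<Rightarrow> nat \<Rightarrow> nat \<Rightarrow> 'g::{ab_group_add,finite} set \<Rightarrow> 'g set \<Rightarrow> bool" where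
  "semiregular_dds m n k l1 l2 N D \<longleftrightarrow>
     divisible_difference_set m n k l1 l2 N D \<and> k > l1 \<and>
     int k ^ 2 - int l2 * int m * int n = 0"

text \<open>Vectors in C^k with coordinates indexed by the elements of D are modelled as
  functions 'g => complex vanishing outside D.\<close>

definition vecspace :: "'g set \<Rightarrow> ('g \<Rightarrow> complex) set" where
  "vecspace D = {v. \<forall>g. g \<notin> D \<longrightarrow> v g = 0}"

definition vinner :: "'g set \<Rightarrow> ('g \<Rightarrow> complex) \<Rightarrow> ('g \<Rightarrow> complex) \<Rightarrow> complex" where
  "vinner D u v = (\<Sum>g\<in>D. u g * cnj (v g))"

definition flat :: "'g set \<Rightarrow> ('g \<Rightarrow> complex) \<Rightarrow> bool" where
  "flat D v \<longleftrightarrow> (\<forall>g\<in>D. \<forall>h\<in>D. cmod (v g) = cmod (v h))"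

definition cspan :: "'g set \<Rightarrow> ('i \<Rightarrow> 'g \<Rightarrow> complex) \<Rightarrow> 'i set \<Rightarrow> ('g \<Rightarrow> complex) set" where
  "cspan D e J = {v. \<exists>c. v = (\<lambda>g. if g \<in> D then (\<Sum>j\<in>J. c j * e j g) else 0)}"

definition orth_proj :: "'g set \<Rightarrow> ('g \<Rightarrow> complex) set \<Rightarrow> ('g \<Rightarrow> complex) \<Rightarrow> ('g \<Rightarrow> complex)" where
  "orth_proj D W v = (THE p. p \<in> W \<and> (\<forall>w\<in>W. vinner D (\<lambda>g. v g - p g) w = 0))"

definition op_trace :: "'g set \<Rightarrow> (('g \<Rightarrow> complex) \<Rightarrow> ('g \<Rightarrow> complex)) \<Rightarrow> complex" where
  "op_trace D T = (\<Sum>g\<in>D. T (\<lambda>x. if x = g then 1 else 0) g)"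

definition tight_fusion_frame ::
  "'g set \<Rightarrow> ('i \<Rightarrow> ('g \<Rightarrow> complex) set) \<Rightarrow> 'i set \<Rightarrow> real \<Rightarrow> bool" where
  "tight_fusion_frame D W I A \<longleftrightarrow>
     (\<forall>v\<in>vecspace D. \<forall>g\<in>D. (\<Sum>i\<in>I. orth_proj D (W i) v g) = of_real A * v g)"

definition equichordal :: "'g set \<Rightarrow> ('i \<Rightarrow> ('g \<Rightarrow> complex) set) \<Rightarrow> 'i set \<Rightarrow> bool" where
  "equichordal D W I \<longleftrightarrow>
     (\<exists>c. \<forall>i\<in>I. \<forall>j\<in>I. i \<noteq> j \<longrightarrow> op_trace D (orth_proj D (W i) \<circ> orth_proj D (W j)) = c)"

definition evec :: "'g set \<Rightarrow> ('g \<Rightarrow> complex) \<Rightarrow> ('g \<Rightarrow> complex) \<Rightarrow> 'g \<Rightarrow> complex" where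
  "evec D \<chi> \<eta> = (\<lambda>g. if g \<in> D then (\<chi> g * \<eta> g) / complex_of_real (sqrt (real (card D))) else 0)"

end

theory Submission
  imports Defs
begin

text \<open>Inner products of the vectors are normalised character sums over D, and counting differences
  gives |\<Sum>d\<in>D. \<theta> d|^2 = k + l1 (\<Sum>g\<in>N - {0}. \<theta> g) + l2 (\<Sum>g\<notin>N. \<theta> g) for every character \<theta>.
  For \<theta> a nontrivial element of the annihilator of N this is k + l1 (n - 1) - l2 n, which vanishes
  because the trivial character gives k^2 = k + l1 (n - 1) + l2 (mn - n) and semiregularity says
  k^2 = l2 mn; hence each family e i is orthonormal. For \<theta> nontrivial on N the sum is k - l1, and
  for i \<noteq> i' every quotient of \<chi> i' \<eta> j' by \<chi> i \<eta> j is such a character, so all chordal traces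
  equal m^2 (k - l1) / k^2. Finally the products \<chi> i \<eta> j enumerate every character exactly once,
  so the sum of the projections is convolution with \<Sum>\<psi>. \<psi> x = |G| [x = 0], a multiple of the identity.\<close>

section \<open>Characters\<close>

lemma char_mult_cnj_self: "is_char \<chi> \<Longrightarrow> \<chi> a * cnj (\<chi> a) = 1"
  unfolding is_char_def by (metis complex_norm_square of_real_1 power_one)

lemma char_nonzero: "is_char \<chi> \<Longrightarrow> \<chi> a \<noteq> 0"
  using char_mult_cnj_self[of \<chi> a] by auto

lemma char_zero: "is_char \<chi> \<Longrightarrow> \<chi> 0 = 1"
  using char_nonzero[of \<chi> 0] unfolding is_char_def by (metis add_0 mult_cancel_left1)

lemma char_diff: "is_char \<chi> \<Longrightarrow> \<chi> (a - b) = \<chi> a * cnj (\<chi> b)"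
proof -
  assume \<chi>: "is_char \<chi>"
  have "\<chi> a * cnj (\<chi> b) = \<chi> (a - b) * (\<chi> b * cnj (\<chi> b))"
    using \<chi> unfolding is_char_def by (metis diff_add_cancel mult.assoc)
  thus ?thesis using char_mult_cnj_self[OF \<chi>] by simp
qed

lemma is_char_mult: "is_char \<alpha> \<Longrightarrow> is_char \<beta> \<Longrightarrow> is_char (\<lambda>g. \<alpha> g * \<beta> g)"
  unfolding is_char_def by (simp add: norm_mult)

lemma is_char_cnj: "is_char \<alpha> \<Longrightarrow> is_char (\<lambda>g. cnj (\<alpha> g))"
  unfolding is_char_def by simp

lemma is_char_one: "is_char (\<lambda>g. 1)"
  unfolding is_char_def by simp

lemma char_mult_cnj_eq_1_iff: "is_char \<beta> \<Longrightarrow> \<alpha> x * cnj (\<beta> x) = 1 \<longleftrightarrow> \<alpha> x = \<beta> x"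
  using char_mult_cnj_self[of \<beta> x] by (metis mult.assoc mult.commute mult.right_neutral)

lemma annihilator_is_char: "\<theta> \<in> annihilator N \<Longrightarrow> is_char \<theta>"
  unfolding annihilator_def by simp

lemma add_subgroup_add: "add_subgroup N \<Longrightarrow> a \<in> N \<Longrightarrow> b \<in> N \<Longrightarrow> a + b \<in> N"
  unfolding add_subgroup_def by (metis diff_0 diff_minus_eq_add)

lemma add_subgroup_UNIV: "add_subgroup UNIV"
  unfolding add_subgroup_def by simp

lemma char_sum_subgroup_eq_0:
  assumes N: "add_subgroup N" "finite N" and \<chi>: "is_char \<chi>" and x: "x \<in> N" "\<chi> x \<noteq> 1"
  shows "(\<Sum>g\<in>N. \<chi> g) = 0"
proof -
  have "(\<Sum>g\<in>N. \<chi> g) = (\<Sum>g\<in>N. \<chi> (g + x))"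
    by (rule sum.reindex_bij_witness[where j="\<lambda>g. g - x" and i="\<lambda>g. g + x"])
       (use N x in \<open>auto simp: add_subgroup_add add_subgroup_def\<close>)
  also have "\<dots> = \<chi> x * (\<Sum>g\<in>N. \<chi> g)"
    using \<chi> unfolding is_char_def by (simp add: sum_distrib_left mult.commute)
  finally have "(1 - \<chi> x) * (\<Sum>g\<in>N. \<chi> g) = 0" by (simp add: algebra_simps)
  thus ?thesis using x by simp
qed

lemma char_dual_sum_eq_0:
  assumes fin: "finite {\<psi>. is_char \<psi>}" and \<phi>: "is_char \<phi>" "\<phi> y \<noteq> 1"
  shows "(\<Sum>\<psi> | is_char \<psi>. \<psi> y) = 0"
proof -
  have "(\<Sum>\<psi> | is_char \<psi>. \<psi> y) = (\<Sum>\<psi> | is_char \<psi>. \<phi> y * \<psi> y)"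
    by (rule sum.reindex_bij_witness[where i="\<lambda>\<psi> g. \<phi> g * \<psi> g" and j="\<lambda>\<psi> g. cnj (\<phi> g) * \<psi> g"])
       (use \<phi> char_mult_cnj_self[OF \<phi>(1)] in
         \<open>auto simp: is_char_mult is_char_cnj mult.assoc[symmetric] mult.commute[of "cnj _"]\<close>)
  also have "\<dots> = \<phi> y * (\<Sum>\<psi> | is_char \<psi>. \<psi> y)" by (simp add: sum_distrib_left)
  finally have "(1 - \<phi> y) * (\<Sum>\<psi> | is_char \<psi>. \<psi> y) = 0" by (simp add: algebra_simps)
  thus ?thesis using \<phi> by simp
qed

text \<open>Assuming that there are \<open>|G|\<close> characters avoids the structure theory of finite abelian
  groups; in the application this count comes from the enumeration by coset representatives.\<close>

lemma char_dual_sum: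
  fixes x :: "'g::{ab_group_add,finite}"
  assumes card: "card {\<psi>::'g \<Rightarrow> complex. is_char \<psi>} = card (UNIV :: 'g set)"
  shows "(\<Sum>\<psi> | is_char \<psi>. \<psi> x) = (if x = 0 then of_nat (card (UNIV :: 'g set)) else 0)"
proof -
  let ?C = "{\<psi>::'g \<Rightarrow> complex. is_char \<psi>}"
  define H where "H = {y. \<forall>\<psi>\<in>?C. \<psi> y = 1}"
  have fin: "finite ?C" using card card.infinite by fastforce
  have row: "(\<Sum>\<psi>\<in>?C. \<psi> y) = (if y \<in> H then of_nat (card (UNIV :: 'g set)) else 0)" for y
  proof (cases "y \<in> H")
    case True
    hence "(\<Sum>\<psi>\<in>?C. \<psi> y) = (\<Sum>\<psi>\<in>?C. 1)" unfolding H_def by (intro sum.cong) auto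
    thus ?thesis using True card by simp
  qed (use char_dual_sum_eq_0[OF fin] in \<open>auto simp: H_def\<close>)
  have column: "(\<Sum>y\<in>UNIV. \<psi> y) = (if \<psi> = (\<lambda>g. 1) then of_nat (card (UNIV :: 'g set)) else 0)" if "\<psi> \<in> ?C" for \<psi>
    using that char_sum_subgroup_eq_0[OF add_subgroup_UNIV, of \<psi>] by fastforce
  \<comment> \<open>summing the character table in both orders gives \<open>|H| |G| = |G|\<close>\<close>
  have "of_nat (card H) * of_nat (card (UNIV :: 'g set)) = (\<Sum>y\<in>UNIV. \<Sum>\<psi>\<in>?C. \<psi> y)"
    by (simp add: row sum.If_cases Int_absorb1)
  also have "\<dots> = (\<Sum>\<psi>\<in>?C. \<Sum>y\<in>UNIV. \<psi> y)" by (rule sum.swap)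
  also have "\<dots> = (\<Sum>\<psi>\<in>?C. if \<psi> = (\<lambda>g. 1) then of_nat (card (UNIV :: 'g set)) else 0)"
    using column by (rule sum.cong[OF refl])
  also have "\<dots> = of_nat (card (UNIV :: 'g set))"
    using fin is_char_one by (simp add: sum.delta')
  finally have "card H = 1" by (simp add: of_nat_mult[symmetric] del: of_nat_mult)
  moreover have "0 \<in> H" unfolding H_def using char_zero by auto
  ultimately have "H = {0}" by (metis card_1_singletonE singletonD)
  thus ?thesis using row by simp
qed

section \<open>Character sums over a difference set\<close>

lemma char_sum_mult_cnj_diff_count:
  fixes D :: "'g::{ab_group_add,finite} set"
  assumes \<theta>: "is_char \<theta>"
  shows "(\<Sum>d\<in>D. \<theta> d) * cnj (\<Sum>d\<in>D. \<theta> d) = of_nat (card D) + (\<Sum>g\<in>UNIV. of_nat (diff_count D g) * \<theta> g)"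
proof -
  let ?off = "{p \<in> D \<times> D. fst p \<noteq> snd p}"
  have diag: "D \<times> D - ?off = (\<lambda>d. (d, d)) ` D" by auto
  have fiber: "{p \<in> ?off. fst p - snd p = g} = {(d, d'). d \<in> D \<and> d' \<in> D \<and> d \<noteq> d' \<and> d - d' = g}" for g
    by auto
  have "(\<Sum>d\<in>D. \<theta> d) * cnj (\<Sum>d\<in>D. \<theta> d) = (\<Sum>d\<in>D. \<Sum>d'\<in>D. \<theta> (d - d'))"
    by (simp add: sum_distrib_left sum_distrib_right char_diff[OF \<theta>]) (rule sum.swap)
  also have "\<dots> = (\<Sum>p\<in>D \<times> D. \<theta> (fst p - snd p))"
    by (simp add: sum.cartesian_product case_prod_beta)
  also have "\<dots> = (\<Sum>p\<in>D \<times> D - ?off. \<theta> (fst p - snd p)) + (\<Sum>p\<in>?off. \<theta> (fst p - snd p))"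
    by (rule sum.subset_diff) auto
  also have "(\<Sum>p\<in>D \<times> D - ?off. \<theta> (fst p - snd p)) = of_nat (card D)"
    unfolding diag by (subst sum.reindex) (auto simp: inj_on_def char_zero[OF \<theta>])
  also have "(\<Sum>p\<in>?off. \<theta> (fst p - snd p)) = (\<Sum>g\<in>UNIV. \<Sum>p\<in>{p \<in> ?off. fst p - snd p = g}. \<theta> (fst p - snd p))"
    by (rule sum.group[symmetric]) auto
  also have "\<dots> = (\<Sum>g\<in>UNIV. of_nat (diff_count D g) * \<theta> g)"
    unfolding diff_count_def fiber[symmetric] by (rule sum.cong) auto
  finally show ?thesis .
qed

lemma dds_char_sum_mult_cnj:
  fixes D N :: "'g::{ab_group_add,finite} set"
  assumes dds: "divisible_difference_set m n k l1 l2 N D" and N: "add_subgroup N" and \<theta>: "is_char \<theta>"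
  shows "(\<Sum>d\<in>D. \<theta> d) * cnj (\<Sum>d\<in>D. \<theta> d) =
    of_nat k + of_nat l1 * ((\<Sum>g\<in>N. \<theta> g) - 1) + of_nat l2 * ((\<Sum>g\<in>UNIV. \<theta> g) - (\<Sum>g\<in>N. \<theta> g))"
proof -
  have count: "card D = k" "\<And>g. g \<notin> N \<Longrightarrow> diff_count D g = l2" "\<And>g. g \<in> N - {0} \<Longrightarrow> diff_count D g = l1"
    using dds unfolding divisible_difference_set_def by auto
  have "0 \<in> N" using N unfolding add_subgroup_def by simp
  have "diff_count D 0 = 0" unfolding diff_count_def by simp
  have "(\<Sum>g\<in>UNIV. of_nat (diff_count D g) * \<theta> g) =
      (\<Sum>g\<in>N - {0}. of_nat (diff_count D g) * \<theta> g) + (\<Sum>g\<in>- N. of_nat (diff_count D g) * \<theta> g)"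
    using \<open>diff_count D 0 = 0\<close> \<open>0 \<in> N\<close>
    by (subst sum.union_disjoint[symmetric]) (auto intro: sum.mono_neutral_right)
  also have "\<dots> = of_nat l1 * (\<Sum>g\<in>N - {0}. \<theta> g) + of_nat l2 * (\<Sum>g\<in>- N. \<theta> g)"
    by (simp add: count sum_distrib_left)
  also have "\<dots> = of_nat l1 * ((\<Sum>g\<in>N. \<theta> g) - 1) + of_nat l2 * ((\<Sum>g\<in>UNIV. \<theta> g) - (\<Sum>g\<in>N. \<theta> g))"
    using \<open>0 \<in> N\<close> by (simp add: sum_diff1 Compl_eq_Diff_UNIV sum_diff char_zero[OF \<theta>])
  finally show ?thesis unfolding char_sum_mult_cnj_diff_count[OF \<theta>] count(1) by (simp add: add.assoc)
qed

lemma semiregular_dds_parameters: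
  fixes D N :: "'g::{ab_group_add,finite} set"
  assumes sr: "semiregular_dds m n k l1 l2 N D" and N: "add_subgroup N"
  shows "of_nat k + of_nat l1 * (of_nat n - 1) = (of_nat l2 * of_nat n :: complex)"
proof -
  have dds: "divisible_difference_set m n k l1 l2 N D" and "int k ^ 2 = int l2 * int m * int n"
    using sr unfolding semiregular_dds_def by auto
  hence "of_nat k * of_nat k = (of_nat l2 * of_nat m * of_nat n :: complex)"
    by (metis of_int_of_nat_eq of_int_mult power2_eq_square)
  moreover have "card D = k" "card (UNIV :: 'g set) = m * n" "card N = n"
    using dds unfolding divisible_difference_set_def by auto
  ultimately show ?thesis
    using dds_char_sum_mult_cnj[OF dds N is_char_one] by (simp add: algebra_simps)
qed

lemma semiregular_dds_char_sum_annihilator: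
  fixes D N :: "'g::{ab_group_add,finite} set"
  assumes sr: "semiregular_dds m n k l1 l2 N D" and N: "add_subgroup N"
    and \<theta>: "\<theta> \<in> annihilator N" and x: "\<theta> x \<noteq> 1"
  shows "(\<Sum>d\<in>D. \<theta> d) = 0"
proof -
  have dds: "divisible_difference_set m n k l1 l2 N D"
    using sr unfolding semiregular_dds_def by auto
  have "(\<Sum>g\<in>N. \<theta> g) = of_nat n"
    using \<theta> dds unfolding annihilator_def divisible_difference_set_def by simp
  moreover have "(\<Sum>g\<in>UNIV. \<theta> g) = 0"
    using char_sum_subgroup_eq_0[OF add_subgroup_UNIV _ annihilator_is_char[OF \<theta>] _ x] by simp
  ultimately have "(\<Sum>d\<in>D. \<theta> d) * cnj (\<Sum>d\<in>D. \<theta> d) = 0"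
    using dds_char_sum_mult_cnj[OF dds N annihilator_is_char[OF \<theta>]] semiregular_dds_parameters[OF sr N]
    by (simp add: algebra_simps)
  thus ?thesis by (metis complex_cnj_zero_iff mult_eq_0_iff)
qed

lemma dds_char_sum_nonannihilator:
  fixes D N :: "'g::{ab_group_add,finite} set"
  assumes dds: "divisible_difference_set m n k l1 l2 N D" and N: "add_subgroup N"
    and \<theta>: "is_char \<theta>" and h: "h \<in> N" "\<theta> h \<noteq> 1"
  shows "(\<Sum>d\<in>D. \<theta> d) * cnj (\<Sum>d\<in>D. \<theta> d) = of_nat k - of_nat l1"
  using dds_char_sum_mult_cnj[OF dds N \<theta>] char_sum_subgroup_eq_0[OF N finite \<theta> h]
    char_sum_subgroup_eq_0[OF add_subgroup_UNIV finite \<theta> _ h(2)] by simp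

section \<open>Projections onto spans of orthonormal systems\<close>

definition orthonormal_on :: "'g set \<Rightarrow> ('j \<Rightarrow> 'g \<Rightarrow> complex) \<Rightarrow> 'j set \<Rightarrow> bool" where
  "orthonormal_on D u J \<longleftrightarrow> (\<forall>j\<in>J. u j \<in> vecspace D) \<and>
     (\<forall>j\<in>J. \<forall>j'\<in>J. vinner D (u j) (u j') = (if j = j' then 1 else 0))"

lemma vinner_diff_left: "vinner D (\<lambda>g. a g - b g) w = vinner D a w - vinner D b w"
  unfolding vinner_def by (simp add: algebra_simps sum_subtractf)

lemma vinner_sum_left:
  "finite J \<Longrightarrow> vinner D (\<lambda>g. \<Sum>l\<in>J. c l * u l g) w = (\<Sum>l\<in>J. c l * vinner D (u l) w)"
  unfolding vinner_def by (simp add: sum_distrib_left sum_distrib_right mult.assoc) (rule sum.swap)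

lemma vinner_span_right:
  assumes "finite J"
  shows "vinner D x (\<lambda>g. if g \<in> D then (\<Sum>j\<in>J. c j * u j g) else 0) = (\<Sum>j\<in>J. cnj (c j) * vinner D x (u j))"
proof -
  have "vinner D x (\<lambda>g. if g \<in> D then (\<Sum>j\<in>J. c j * u j g) else 0) = (\<Sum>g\<in>D. x g * cnj (\<Sum>j\<in>J. c j * u j g))"
    unfolding vinner_def by (rule sum.cong) auto
  also have "\<dots> = (\<Sum>j\<in>J. cnj (c j) * vinner D x (u j))"
    unfolding vinner_def by (simp add: sum_distrib_left sum_distrib_right mult.assoc mult.left_commute) (rule sum.swap)
  finally show ?thesis .
qed

lemma vinner_cnj: "vinner D a b = cnj (vinner D b a)"
  unfolding vinner_def by (simp add: mult.commute)

lemma vinner_self_eq_0: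
  assumes "finite D" "vinner D d d = 0" "g \<in> D"
  shows "d g = 0"
proof -
  have "vinner D d d = complex_of_real (\<Sum>g\<in>D. (cmod (d g))\<^sup>2)"
    unfolding vinner_def of_real_sum complex_norm_square by simp
  hence "(\<Sum>g\<in>D. (cmod (d g))\<^sup>2) = 0" using assms(2) of_real_eq_0_iff by metis
  hence "(cmod (d g))\<^sup>2 = 0" using assms(1,3) by (subst (asm) sum_nonneg_eq_0_iff) auto
  thus ?thesis by simp
qed

lemma orth_proj_cspan:
  assumes D: "finite D" and J: "finite J" and u: "orthonormal_on D u J"
  shows "orth_proj D (cspan D u J) v = (\<lambda>x. \<Sum>j\<in>J. vinner D v (u j) * u j x)"
proof -
  define p where "p = (\<lambda>x. \<Sum>j\<in>J. vinner D v (u j) * u j x)"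
  have vs: "u j g = 0" if "j \<in> J" "g \<notin> D" for j g
    using u that unfolding orthonormal_on_def vecspace_def by auto
  have orth: "vinner D (u j) (u j') = (if j = j' then 1 else 0)" if "j \<in> J" "j' \<in> J" for j j'
    using u that unfolding orthonormal_on_def by auto
  have p_form: "p = (\<lambda>g. if g \<in> D then (\<Sum>j\<in>J. vinner D v (u j) * u j g) else 0)"
    unfolding p_def using vs by (auto intro!: ext sum.neutral)
  have p_in: "p \<in> cspan D u J" unfolding cspan_def mem_Collect_eq by (rule exI, rule p_form)
  have "vinner D (\<lambda>g. v g - p g) (u j) = 0" if "j \<in> J" for j
  proof -
    have "vinner D p (u j) = (\<Sum>l\<in>J. vinner D v (u l) * vinner D (u l) (u j))"
      unfolding p_def by (rule vinner_sum_left[OF J])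
    also have "\<dots> = (\<Sum>l\<in>J. if l = j then vinner D v (u j) else 0)"
      by (rule sum.cong) (auto simp: orth that)
    also have "\<dots> = vinner D v (u j)" using J that by simp
    finally show ?thesis by (simp add: vinner_diff_left)
  qed
  hence p_orth: "\<forall>w\<in>cspan D u J. vinner D (\<lambda>g. v g - p g) w = 0"
    unfolding cspan_def by (auto simp: vinner_span_right[OF J])
  show ?thesis unfolding orth_proj_def p_def[symmetric]
  proof (rule the_equality)
    fix q assume q: "q \<in> cspan D u J \<and> (\<forall>w\<in>cspan D u J. vinner D (\<lambda>g. v g - q g) w = 0)"
    then obtain c where q_form: "q = (\<lambda>g. if g \<in> D then (\<Sum>j\<in>J. c j * u j g) else 0)"
      unfolding cspan_def by blast
    define d where "d = (\<lambda>g. p g - q g)"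
    have d_form: "d = (\<lambda>g. if g \<in> D then (\<Sum>j\<in>J. (vinner D v (u j) - c j) * u j g) else 0)"
      unfolding d_def q_form by (subst p_form) (auto simp: algebra_simps sum_subtractf)
    hence "d \<in> cspan D u J" unfolding cspan_def mem_Collect_eq by (intro exI)
    hence "vinner D (\<lambda>g. v g - q g) d - vinner D (\<lambda>g. v g - p g) d = 0"
      using q p_orth by simp
    hence "vinner D d d = 0" unfolding d_def vinner_diff_left[symmetric] by (simp add: algebra_simps)
    hence "d g = 0" for g using vinner_self_eq_0[OF D, of d g] d_form by (cases "g \<in> D") simp_all
    thus "q = p" unfolding d_def by auto
  qed (use p_in p_orth in blast)
qed

lemma op_trace_orth_proj_comp:
  assumes D: "finite D" and J: "finite J" and L: "finite L"
    and u: "orthonormal_on D u J" and w: "orthonormal_on D w L"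
  shows "op_trace D (orth_proj D (cspan D u J) \<circ> orth_proj D (cspan D w L)) =
    (\<Sum>j\<in>J. \<Sum>l\<in>L. vinner D (w l) (u j) * cnj (vinner D (w l) (u j)))"
proof -
  have unit_coeff: "vinner D (\<lambda>x. if x = g then 1 else 0) (w l) = cnj (w l g)" if "g \<in> D" for g l
  proof -
    have "vinner D (\<lambda>x. if x = g then 1 else 0) (w l) = (\<Sum>h\<in>D. if h = g then cnj (w l h) else 0)"
      unfolding vinner_def by (rule sum.cong) auto
    thus ?thesis using D that by simp
  qed
  have "op_trace D (orth_proj D (cspan D u J) \<circ> orth_proj D (cspan D w L)) =
     (\<Sum>g\<in>D. \<Sum>j\<in>J. (\<Sum>l\<in>L. cnj (w l g) * vinner D (w l) (u j)) * u j g)"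
    unfolding op_trace_def comp_def orth_proj_cspan[OF D J u] orth_proj_cspan[OF D L w] vinner_sum_left[OF L]
    by (rule sum.cong) (simp_all add: unit_coeff)
  also have "\<dots> = (\<Sum>j\<in>J. \<Sum>l\<in>L. vinner D (w l) (u j) * (\<Sum>g\<in>D. u j g * cnj (w l g)))"
    by (simp add: sum_distrib_left sum_distrib_right mult.commute mult.left_commute)
       (subst sum.swap, rule sum.cong[OF refl], subst sum.swap, rule refl)
  also have "\<dots> = (\<Sum>j\<in>J. \<Sum>l\<in>L. vinner D (w l) (u j) * cnj (vinner D (w l) (u j)))"
    using vinner_cnj[of D "u j" "w l" for j l] unfolding vinner_def by simp
  finally show ?thesis .
qed

lemma evec_in_vecspace: "evec D \<alpha> \<beta> \<in> vecspace D"
  unfolding evec_def vecspace_def by simp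

lemma flat_evec: "is_char \<alpha> \<Longrightarrow> is_char \<beta> \<Longrightarrow> flat D (evec D \<alpha> \<beta>)"
  unfolding flat_def evec_def is_char_def by (simp add: norm_mult norm_divide)

lemma of_real_sqrt_mult_self: "complex_of_real (sqrt (real c)) * complex_of_real (sqrt (real c)) = of_nat c"
  by (simp flip: of_real_mult)

lemma vinner_evec:
  "vinner D (evec D \<alpha> \<beta>) (evec D \<alpha>' \<beta>') = (\<Sum>g\<in>D. \<alpha> g * \<beta> g * cnj (\<alpha>' g * \<beta>' g)) / of_nat (card D)"
proof -
  let ?s = "complex_of_real (sqrt (real (card D)))"
  have "vinner D (evec D \<alpha> \<beta>) (evec D \<alpha>' \<beta>') = (\<Sum>g\<in>D. \<alpha> g * \<beta> g * cnj (\<alpha>' g * \<beta>' g) / (?s * ?s))"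
    unfolding vinner_def evec_def by (rule sum.cong) (auto simp: field_simps)
  thus ?thesis by (simp add: of_real_sqrt_mult_self sum_divide_distrib)
qed

lemma vinner_evec_same_char:
  assumes "is_char \<alpha>"
  shows "vinner D (evec D \<alpha> \<beta>) (evec D \<alpha> \<beta>') = (\<Sum>g\<in>D. \<beta> g * cnj (\<beta>' g)) / of_nat (card D)"
proof -
  have "\<alpha> g * \<beta> g * cnj (\<alpha> g * \<beta>' g) = \<beta> g * cnj (\<beta>' g)" for g
    using char_mult_cnj_self[OF assms, of g] by (simp add: algebra_simps)
  then show ?thesis unfolding vinner_evec by presburger
qed

lemma vinner_mult_evec:
  assumes \<alpha>: "is_char \<alpha>" and \<beta>: "is_char \<beta>" and g: "g \<in> D"
  shows "vinner D v (evec D \<alpha> \<beta>) * evec D \<alpha> \<beta> g = (\<Sum>h\<in>D. v h * (\<alpha> (g - h) * \<beta> (g - h))) / of_nat (card D)"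
proof -
  let ?s = "complex_of_real (sqrt (real (card D)))"
  have "vinner D v (evec D \<alpha> \<beta>) * evec D \<alpha> \<beta> g = (\<Sum>h\<in>D. v h * cnj (\<alpha> h * \<beta> h) / ?s) * (\<alpha> g * \<beta> g / ?s)"
    unfolding vinner_def evec_def using g by (auto intro!: sum.cong)
  also have "\<dots> = (\<Sum>h\<in>D. v h * cnj (\<alpha> h * \<beta> h) * (\<alpha> g * \<beta> g)) / (?s * ?s)"
    by (simp only: sum_divide_distrib[symmetric] sum_distrib_right[symmetric] times_divide_times_eq)
  finally show ?thesis
    by (simp add: of_real_sqrt_mult_self char_diff[OF \<alpha>] char_diff[OF \<beta>] algebra_simps)
qed

section \<open>The fusion frame of a semiregular divisible difference set\<close>

locale dds_character_frame =
  fixes N D :: "'g::{ab_group_add,finite} set" and m n k l1 l2 :: nat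
    and \<eta> \<chi> :: "nat \<Rightarrow> 'g \<Rightarrow> complex"
  assumes subgroup: "add_subgroup N"
    and card_group: "card (UNIV :: 'g set) = m * n"
    and semiregular: "semiregular_dds m n k l1 l2 N D"
    and eta_enum: "bij_betw \<eta> {1..m} (annihilator N)"
    and chi_char: "\<And>i. i \<in> {1..n} \<Longrightarrow> is_char (\<chi> i)"
    and chi_coset_reps: "\<And>\<psi>. is_char \<psi> \<Longrightarrow>
      \<exists>!i. i \<in> {1..n} \<and> (\<exists>\<theta>\<in>annihilator N. \<psi> = (\<lambda>g. \<chi> i g * \<theta> g))"
begin

lemma dds: "divisible_difference_set m n k l1 l2 N D"
  using semiregular unfolding semiregular_dds_def by simp

lemma card_D: "card D = k"
  using dds unfolding divisible_difference_set_def by simp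

lemma k_pos: "k > 0"
  using semiregular unfolding semiregular_dds_def by simp

lemma eta_annihilator: "j \<in> {1..m} \<Longrightarrow> \<eta> j \<in> annihilator N"
  using eta_enum unfolding bij_betw_def by auto

lemma eta_char: "j \<in> {1..m} \<Longrightarrow> is_char (\<eta> j)"
  using eta_annihilator annihilator_is_char by blast

lemma chi_eta_char: "i \<in> {1..n} \<Longrightarrow> j \<in> {1..m} \<Longrightarrow> is_char (\<lambda>g. \<chi> i g * \<eta> j g)"
  by (intro is_char_mult chi_char eta_char)

lemma chi_eta_enumerates_chars:
  "bij_betw (\<lambda>(i, j) g. \<chi> i g * \<eta> j g) ({1..n} \<times> {1..m}) {\<psi>. is_char \<psi>}"
proof (rule bij_betwI')
  fix p q assume "p \<in> {1..n} \<times> {1..m}" "q \<in> {1..n} \<times> {1..m}"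
  then obtain i j i' j' where p: "p = (i, j)" "i \<in> {1..n}" "j \<in> {1..m}"
    and q: "q = (i', j')" "i' \<in> {1..n}" "j' \<in> {1..m}" by auto
  show "((\<lambda>(i, j) g. \<chi> i g * \<eta> j g) p = (\<lambda>(i, j) g. \<chi> i g * \<eta> j g) q) = (p = q)"
  proof
    assume eq: "(\<lambda>(i, j) g. \<chi> i g * \<eta> j g) p = (\<lambda>(i, j) g. \<chi> i g * \<eta> j g) q"
    hence "(\<lambda>g. \<chi> i g * \<eta> j g) = (\<lambda>g. \<chi> i' g * \<eta> j' g)" using p q by simp
    hence "i = i'"
      using chi_coset_reps[OF chi_eta_char[OF p(2,3)]] p q eta_annihilator[OF p(3)] eta_annihilator[OF q(3)]
      by blast
    hence "\<eta> j = \<eta> j'"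
      using eq p q char_nonzero[OF chi_char[OF p(2)]] by (auto simp: fun_eq_iff)
    hence "j = j'" using eta_enum p q unfolding bij_betw_def inj_on_def by blast
    thus "p = q" using \<open>i = i'\<close> p q by simp
  qed simp
next
  fix \<psi> :: "'g \<Rightarrow> complex" assume "\<psi> \<in> {\<psi>. is_char \<psi>}"
  then obtain i \<theta> where i: "i \<in> {1..n}" and "\<theta> \<in> annihilator N" and \<psi>: "\<psi> = (\<lambda>g. \<chi> i g * \<theta> g)"
    using chi_coset_reps by blast
  then obtain j where "j \<in> {1..m}" "\<theta> = \<eta> j"
    using eta_enum unfolding bij_betw_def by blast
  thus "\<exists>p\<in>{1..n} \<times> {1..m}. \<psi> = (\<lambda>(i, j) g. \<chi> i g * \<eta> j g) p" using i \<psi> by force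
qed (auto intro: chi_eta_char)

lemma sum_chi_eta:
  "(\<Sum>i\<in>{1..n}. \<Sum>j\<in>{1..m}. \<chi> i x * \<eta> j x) = (if x = 0 then of_nat (m * n) else 0)"
proof -
  have card: "card {\<psi>::'g \<Rightarrow> complex. is_char \<psi>} = card (UNIV :: 'g set)"
    using bij_betw_same_card[OF chi_eta_enumerates_chars] card_group by (simp add: mult.commute)
  have "(\<Sum>i\<in>{1..n}. \<Sum>j\<in>{1..m}. \<chi> i x * \<eta> j x) = (\<Sum>\<psi> | is_char \<psi>. \<psi> x)"
    by (simp add: sum.cartesian_product case_prod_beta
        flip: sum.reindex_bij_betw[OF chi_eta_enumerates_chars, of "\<lambda>\<psi>. \<psi> x"])
  also have "\<dots> = (if x = 0 then of_nat (card (UNIV :: 'g set)) else 0)"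
    by (rule char_dual_sum[OF card])
  finally show ?thesis using card_group by simp
qed

lemma orthonormal_evec:
  assumes i: "i \<in> {1..n}"
  shows "orthonormal_on D (\<lambda>j. evec D (\<chi> i) (\<eta> j)) {1..m}"
  unfolding orthonormal_on_def
proof (intro conjI ballI evec_in_vecspace)
  fix j j' assume j: "j \<in> {1..m}" and j': "j' \<in> {1..m}"
  let ?\<theta> = "\<lambda>g. \<eta> j g * cnj (\<eta> j' g)"
  have "vinner D (evec D (\<chi> i) (\<eta> j)) (evec D (\<chi> i) (\<eta> j')) = (\<Sum>g\<in>D. ?\<theta> g) / of_nat k"
    by (simp add: vinner_evec_same_char[OF chi_char[OF i]] card_D)
  also have "\<dots> = (if j = j' then 1 else 0)"
  proof (cases "j = j'")
    case True
    thus ?thesis using char_mult_cnj_self[OF eta_char[OF j]] card_D k_pos by simp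
  next
    case False
    hence "\<eta> j \<noteq> \<eta> j'" using eta_enum j j' unfolding bij_betw_def inj_on_def by blast
    then obtain x where "?\<theta> x \<noteq> 1"
      using char_mult_cnj_eq_1_iff[OF eta_char[OF j']] by (auto simp: fun_eq_iff)
    moreover have "?\<theta> \<in> annihilator N"
      using eta_annihilator[OF j] eta_annihilator[OF j']
      unfolding annihilator_def by (auto intro: is_char_mult is_char_cnj)
    ultimately show ?thesis
      using semiregular_dds_char_sum_annihilator[OF semiregular subgroup] False by simp
  qed
  finally show "vinner D (evec D (\<chi> i) (\<eta> j)) (evec D (\<chi> i) (\<eta> j')) = (if j = j' then 1 else 0)" .
qed

lemma tight_fusion_frame_evec:
  "tight_fusion_frame D (\<lambda>i. cspan D (\<lambda>j. evec D (\<chi> i) (\<eta> j)) {1..m}) {1..n} (real (n * m) / real k)"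
  unfolding tight_fusion_frame_def
proof (intro ballI)
  fix v g assume g: "g \<in> D"
  have "(\<Sum>i\<in>{1..n}. orth_proj D (cspan D (\<lambda>j. evec D (\<chi> i) (\<eta> j)) {1..m}) v g)
      = (\<Sum>i\<in>{1..n}. \<Sum>j\<in>{1..m}. vinner D v (evec D (\<chi> i) (\<eta> j)) * evec D (\<chi> i) (\<eta> j) g)"
    by (rule sum.cong[OF refl], subst orth_proj_cspan[OF finite finite_atLeastAtMost orthonormal_evec]) simp_all
  also have "\<dots> = (\<Sum>i\<in>{1..n}. \<Sum>j\<in>{1..m}. (\<Sum>h\<in>D. v h * (\<chi> i (g - h) * \<eta> j (g - h))) / of_nat k)"
    by (simp add: vinner_mult_evec[OF chi_char eta_char g] card_D)
  also have "\<dots> = (\<Sum>h\<in>D. v h * (\<Sum>i\<in>{1..n}. \<Sum>j\<in>{1..m}. \<chi> i (g - h) * \<eta> j (g - h))) / of_nat k"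
    by (simp add: sum_divide_distrib[symmetric] sum_distrib_left sum.swap[of _ D])
  also have "\<dots> = (\<Sum>h\<in>D. if h = g then v h * of_nat (m * n) else 0) / of_nat k"
    unfolding sum_chi_eta by (rule arg_cong[where f="\<lambda>s. s / _"], rule sum.cong) auto
  also have "\<dots> = of_real (real (n * m) / real k) * v g"
    using g by (simp add: mult.commute)
  finally show "(\<Sum>i\<in>{1..n}. orth_proj D (cspan D (\<lambda>j. evec D (\<chi> i) (\<eta> j)) {1..m}) v g)
      = of_real (real (n * m) / real k) * v g" .
qed

lemma chi_eta_quotient_nontrivial_on_subgroup:
  assumes i: "i \<in> {1..n}" "i' \<in> {1..n}" "i \<noteq> i'" and j: "j \<in> {1..m}" "j' \<in> {1..m}"
  shows "\<exists>h\<in>N. \<chi> i' h * \<eta> j' h * cnj (\<chi> i h * \<eta> j h) \<noteq> 1"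
proof (rule ccontr)
  let ?\<theta> = "\<lambda>g. \<eta> j g * (\<chi> i' g * \<eta> j' g * cnj (\<chi> i g * \<eta> j g))"
  assume "\<not> ?thesis"
  moreover have "is_char ?\<theta>"
    using is_char_mult[OF eta_char[OF j(1)]
        is_char_mult[OF chi_eta_char[OF i(2) j(2)] is_char_cnj[OF chi_eta_char[OF i(1) j(1)]]]] .
  ultimately have \<theta>_annihilator: "?\<theta> \<in> annihilator N"
    using eta_annihilator[OF j(1)] unfolding annihilator_def by auto
  have \<theta>_eq: "(\<lambda>g. \<chi> i' g * \<eta> j' g) = (\<lambda>g. \<chi> i g * ?\<theta> g)"
  proof
    fix g
    have "\<chi> i g * ?\<theta> g = (\<chi> i g * \<eta> j g * cnj (\<chi> i g * \<eta> j g)) * (\<chi> i' g * \<eta> j' g)"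
      by (simp add: algebra_simps)
    thus "\<chi> i' g * \<eta> j' g = \<chi> i g * ?\<theta> g"
      by (simp only: char_mult_cnj_self[OF chi_eta_char[OF i(1) j(1)]] mult_1_left)
  qed
  have "i \<in> {1..n} \<and> (\<exists>\<theta>\<in>annihilator N. (\<lambda>g. \<chi> i' g * \<eta> j' g) = (\<lambda>g. \<chi> i g * \<theta> g))"
    using i(1) \<theta>_annihilator \<theta>_eq by (intro conjI bexI[of _ ?\<theta>])
  moreover have "i' \<in> {1..n} \<and> (\<exists>\<theta>\<in>annihilator N. (\<lambda>g. \<chi> i' g * \<eta> j' g) = (\<lambda>g. \<chi> i' g * \<theta> g))"
    using i(2) eta_annihilator[OF j(2)] by blast
  ultimately show False
    using chi_coset_reps[OF chi_eta_char[OF i(2) j(2)]] i(3) by (elim ex1E) blast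
qed

lemma vinner_evec_cross:
  assumes i: "i \<in> {1..n}" "i' \<in> {1..n}" "i \<noteq> i'" and j: "j \<in> {1..m}" "j' \<in> {1..m}"
  defines "c \<equiv> vinner D (evec D (\<chi> i') (\<eta> j')) (evec D (\<chi> i) (\<eta> j))"
  shows "c * cnj c = (of_nat k - of_nat l1) / (of_nat k * of_nat k)"
proof -
  let ?\<theta> = "\<lambda>g. \<chi> i' g * \<eta> j' g * cnj (\<chi> i g * \<eta> j g)"
  have \<theta>: "is_char ?\<theta>"
    using is_char_mult[OF chi_eta_char[OF i(2) j(2)] is_char_cnj[OF chi_eta_char[OF i(1) j(1)]]] .
  obtain h where "h \<in> N" "?\<theta> h \<noteq> 1"
    using chi_eta_quotient_nontrivial_on_subgroup[OF i j] by blast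
  hence "(\<Sum>g\<in>D. ?\<theta> g) * cnj (\<Sum>g\<in>D. ?\<theta> g) = of_nat k - of_nat l1"
    by (rule dds_char_sum_nonannihilator[OF dds subgroup \<theta>])
  moreover have "c = (\<Sum>g\<in>D. ?\<theta> g) / of_nat k"
    unfolding c_def vinner_evec card_D ..
  ultimately show ?thesis by (simp add: field_simps)
qed

lemma equichordal_evec: "equichordal D (\<lambda>i. cspan D (\<lambda>j. evec D (\<chi> i) (\<eta> j)) {1..m}) {1..n}"
  unfolding equichordal_def
proof (intro exI ballI impI)
  fix i i' assume i: "i \<in> {1..n}" "i' \<in> {1..n}" "i \<noteq> i'"
  have "op_trace D (orth_proj D (cspan D (\<lambda>j. evec D (\<chi> i) (\<eta> j)) {1..m})
          \<circ> orth_proj D (cspan D (\<lambda>j. evec D (\<chi> i') (\<eta> j)) {1..m}))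
      = (\<Sum>j\<in>{1..m}. \<Sum>j'\<in>{1..m}.
          vinner D (evec D (\<chi> i') (\<eta> j')) (evec D (\<chi> i) (\<eta> j))
          * cnj (vinner D (evec D (\<chi> i') (\<eta> j')) (evec D (\<chi> i) (\<eta> j))))"
    by (rule op_trace_orth_proj_comp[OF finite finite_atLeastAtMost finite_atLeastAtMost
          orthonormal_evec[OF i(1)] orthonormal_evec[OF i(2)]])
  also have "\<dots> = (\<Sum>j\<in>{1..m}. \<Sum>j'\<in>{1..m}. (of_nat k - of_nat l1) / (of_nat k * of_nat k))"
    by (intro sum.cong refl vinner_evec_cross[OF i]) auto
  finally show "op_trace D (orth_proj D (cspan D (\<lambda>j. evec D (\<chi> i) (\<eta> j)) {1..m})
          \<circ> orth_proj D (cspan D (\<lambda>j. evec D (\<chi> i') (\<eta> j)) {1..m}))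
      = of_nat m * of_nat m * (of_nat k - of_nat l1) / (of_nat k * of_nat k)"
    by simp
qed

end

theorem mainTheorem1:
  fixes N D :: "'g::{ab_group_add,finite} set"
    and m n k l1 l2 :: nat
    and \<eta> \<chi> :: "nat \<Rightarrow> 'g \<Rightarrow> complex"
  assumes "add_subgroup N"
    and "card (UNIV :: 'g set) = m * n" and "card N = n"
    and "semiregular_dds m n k l1 l2 N D"
    and "bij_betw \<eta> {1..m} (annihilator N)"
    and "\<forall>i\<in>{1..n}. is_char (\<chi> i)"
    and "\<forall>\<psi>. is_char \<psi> \<longrightarrow>
           (\<exists>!i. i \<in> {1..n} \<and> (\<exists>\<theta>\<in>annihilator N. \<psi> = (\<lambda>g. \<chi> i g * \<theta> g)))"
  defines "e \<equiv> (\<lambda>i j. evec D (\<chi> i) (\<eta> j))"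
    and "W \<equiv> (\<lambda>i. cspan D (\<lambda>j. evec D (\<chi> i) (\<eta> j)) {1..m})"
  shows "(\<forall>i\<in>{1..n}.
            (\<forall>j\<in>{1..m}. e i j \<in> vecspace D \<and> flat D (e i j)) \<and>
            (\<forall>j\<in>{1..m}. \<forall>j'\<in>{1..m}. vinner D (e i j) (e i j') = (if j = j' then 1 else 0)))
       \<and> tight_fusion_frame D W {1..n} (real (n * m) / real k)
       \<and> equichordal D W {1..n}"
proof -
  interpret dds_character_frame N D m n k l1 l2 \<eta> \<chi>
    using assms(1,2,4-7) by unfold_locales auto
  have "flat D (e i j)" if "i \<in> {1..n}" "j \<in> {1..m}" for i j
    unfolding e_def using that by (intro flat_evec chi_char eta_char)
  moreover have "orthonormal_on D (e i) {1..m}" if "i \<in> {1..n}" for i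
    unfolding e_def using orthonormal_evec[OF that] .
  ultimately show ?thesis
    unfolding W_def using tight_fusion_frame_evec equichordal_evec
    by (auto simp: orthonormal_on_def)
qed

end
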